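(* Let $\alpha\ge 1$ and $w>0$. If $p\in\mathcal{P}_{\alpha,w}$ then $T[p]\in\mathcal{P}_{\alpha,w}$.
   Context: For $\alpha\ge 1$ and $w>0$, $\mathcal{P}_{\alpha,w}$ is the set of probability densities $p$ on $[0,\infty)$ with $\int_0^\infty x\,p(x)\,dx=w$ and $M_\alpha(p)=\int_0^\infty x^\alpha p(x)\,dx<\infty$. For a probability density $p$ on $[0,\infty)$, $S[p](x)=\int_x^\infty \frac{p(u)}{u}\,du$ and $T[p](x)=\int_0^x S[p](x-v)\,S[p](v)\,dv$ for $x\ge0$. *)

theory Defs
  imports "HOL-Analysis.Analysis"
begin

text \<open>Densities on [0,inf) are represented as Borel measurable functions with values in
  [0,inf] (type ennreal); only their values on [0,inf) matter.\<close>

definition Pclass :: "real \<Rightarrow> real \<Rightarrow> (real \<Rightarrow> ennreal) set" where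
  "Pclass \<alpha> w = {p. p \<in> borel_measurable borel
      \<and> (\<integral>\<^sup>+ x\<in>{0..}. p x \<partial>lborel) = 1
      \<and> (\<integral>\<^sup>+ x\<in>{0..}. ennreal x * p x \<partial>lborel) = ennreal w
      \<and> (\<integral>\<^sup>+ x\<in>{0..}. ennreal (x powr \<alpha>) * p x \<partial>lborel) < \<infinity>}"

definition Sop :: "(real \<Rightarrow> ennreal) \<Rightarrow> real \<Rightarrow> ennreal" where
  "Sop p x = (\<integral>\<^sup>+ u\<in>{x..}. p u * ennreal (1 / u) \<partial>lborel)"

definition Top :: "(real \<Rightarrow> ennreal) \<Rightarrow> real \<Rightarrow> ennreal" where
  "Top p x = (\<integral>\<^sup>+ v\<in>{0..x}. Sop p (x - v) * Sop p v \<partial>lborel)"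

end

theory Submission
  imports Defs
begin

text \<open>Fubini turns integrals against \<open>S[p]\<close> into integrals against \<open>p\<close>:
  \<open>\<integral> h S[p] = \<integral> p(u) u\<^sup>-\<^sup>1 \<integral>\<^sub>0\<^sup>u h\<close>. Hence \<open>S[p]\<close> has the same mass as \<open>p\<close>, half its mean,
  and \<open>\<beta>\<close>-th moment \<open>M\<^sub>\<beta>(p)/(\<beta>+1)\<close>. Since \<open>T[p] = S[p] * S[p]\<close> is a convolution,
  \<open>\<integral> g T[p] = \<integral>\<integral> g(a+v) S[p](a) S[p](v)\<close>: for \<open>g(x) = x\<close> this gives mass times mean,
  and \<open>(a+v)\<^sup>\<alpha> \<le> 2\<^sup>\<alpha> (a\<^sup>\<alpha> + v\<^sup>\<alpha>)\<close> bounds the \<open>\<alpha>\<close>-th moment.\<close>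

lemma measurable_mem_atLeast [measurable (raw)]:
  fixes f g :: "'a \<Rightarrow> real"
  assumes [measurable]: "f \<in> borel_measurable M" "g \<in> borel_measurable M"
  shows "Measurable.pred M (\<lambda>x. f x \<in> {g x..})"
  by (simp only: atLeast_iff) measurable

lemma measurable_mem_atLeastAtMost [measurable (raw)]:
  fixes f g h :: "'a \<Rightarrow> real"
  assumes [measurable]: "f \<in> borel_measurable M" "g \<in> borel_measurable M" "h \<in> borel_measurable M"
  shows "Measurable.pred M (\<lambda>x. f x \<in> {g x..h x})"
  by (simp only: atLeastAtMost_iff) measurable

lemma Sop_measurable [measurable]:
  assumes [measurable]: "p \<in> borel_measurable borel"
  shows "Sop p \<in> borel_measurable borel"
  unfolding Sop_def by measurable

lemma Top_measurable [measurable]: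
  assumes [measurable]: "p \<in> borel_measurable borel"
  shows "Top p \<in> borel_measurable borel"
  unfolding Top_def by measurable

lemma nn_set_integral_cmult:
  assumes [measurable]: "f \<in> borel_measurable M" "A \<in> sets M"
  shows "(\<integral>\<^sup>+x\<in>A. c * f x \<partial>M) = c * (\<integral>\<^sup>+x\<in>A. f x \<partial>M)"
  by (subst nn_integral_cmult[symmetric]) (auto simp: mult.assoc)

lemma nn_integral_Sop_Fubini:
  assumes [measurable]: "p \<in> borel_measurable borel" "h \<in> borel_measurable borel"
  shows "(\<integral>\<^sup>+a\<in>{0..}. h a * Sop p a \<partial>lborel) =
    (\<integral>\<^sup>+u\<in>{0..}. p u * ennreal (1 / u) * (\<integral>\<^sup>+a\<in>{0..u}. h a \<partial>lborel) \<partial>lborel)"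
proof -
  have "(\<integral>\<^sup>+a\<in>{0..}. h a * Sop p a \<partial>lborel) =
      (\<integral>\<^sup>+a. \<integral>\<^sup>+u. h a * indicator {0..} a * (p u * ennreal (1 / u) * indicator {a..} u) \<partial>lborel \<partial>lborel)"
    by (intro nn_integral_cong) (simp add: Sop_def nn_integral_cmult[symmetric] ac_simps)
  also have "\<dots> = (\<integral>\<^sup>+u. \<integral>\<^sup>+a. h a * indicator {0..} a * (p u * ennreal (1 / u) * indicator {a..} u) \<partial>lborel \<partial>lborel)"
    by (rule lborel_pair.Fubini') measurable
  also have "\<dots> = (\<integral>\<^sup>+u. \<integral>\<^sup>+a. p u * ennreal (1 / u) * indicator {0..} u * (h a * indicator {0..u} a) \<partial>lborel \<partial>lborel)"
    by (intro nn_integral_cong) (auto simp: indicator_def ac_simps)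
  also have "\<dots> = (\<integral>\<^sup>+u. p u * ennreal (1 / u) * indicator {0..} u * (\<integral>\<^sup>+a\<in>{0..u}. h a \<partial>lborel) \<partial>lborel)"
    by (intro nn_integral_cong nn_integral_cmult) measurable
  finally show ?thesis
    by (simp add: ac_simps)
qed

lemma nn_integral_Sop_primitive:
  assumes [measurable]: "p \<in> borel_measurable borel" "h \<in> borel_measurable borel"
    and primitive: "\<And>u. 0 < u \<Longrightarrow> (\<integral>\<^sup>+a\<in>{0..u}. h a \<partial>lborel) = ennreal u * c u"
  shows "(\<integral>\<^sup>+a\<in>{0..}. h a * Sop p a \<partial>lborel) = (\<integral>\<^sup>+u\<in>{0..}. c u * p u \<partial>lborel)"
  unfolding nn_integral_Sop_Fubini[OF assms(1,2)]
proof (rule nn_integral_cong_AE)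
  show "AE u in lborel. p u * ennreal (1 / u) * (\<integral>\<^sup>+a\<in>{0..u}. h a \<partial>lborel) * indicator {0..} u
      = c u * p u * indicator {0..} u"
    using AE_lborel_singleton[of 0]
  proof eventually_elim
    case (elim u)
    show ?case
    proof (cases "0 \<le> u")
      case True
      with elim have "0 < u" by simp
      then have "ennreal (1 / u) * ennreal u = 1"
        by (simp flip: ennreal_mult)
      moreover have "p u * ennreal (1 / u) * (ennreal u * c u) = ennreal (1 / u) * ennreal u * (c u * p u)"
        by (simp only: ac_simps)
      ultimately show ?thesis
        using True by (simp add: primitive \<open>0 < u\<close>)
    qed simp
  qed
qed

lemma nn_integral_Sop:
  assumes [measurable]: "p \<in> borel_measurable borel"
  shows "(\<integral>\<^sup>+a\<in>{0..}. Sop p a \<partial>lborel) = (\<integral>\<^sup>+u\<in>{0..}. p u \<partial>lborel)"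
  using nn_integral_Sop_primitive[OF assms, of "\<lambda>_. 1" "\<lambda>_. 1"] by simp

lemma nn_integral_powr_Sop:
  assumes [measurable]: "p \<in> borel_measurable borel" and "\<beta> > -1"
  shows "(\<integral>\<^sup>+a\<in>{0..}. ennreal (a powr \<beta>) * Sop p a \<partial>lborel) =
    ennreal (1 / (\<beta> + 1)) * (\<integral>\<^sup>+u\<in>{0..}. ennreal (u powr \<beta>) * p u \<partial>lborel)"
proof -
  have "(\<integral>\<^sup>+a\<in>{0..u}. ennreal (a powr \<beta>) \<partial>lborel) = ennreal u * (ennreal (1 / (\<beta> + 1)) * ennreal (u powr \<beta>))"
    if "0 < u" for u
  proof -
    have "(\<integral>\<^sup>+a\<in>{0..u}. ennreal (a powr \<beta>) \<partial>lborel) = ennreal (u powr (\<beta> + 1) / (\<beta> + 1))"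
      using has_integral_powr_from_0[OF \<open>\<beta> > -1\<close>, of u] that
      by (subst nn_integral_has_integral_lebesgue') auto
    also have "u powr (\<beta> + 1) / (\<beta> + 1) = u * (1 / (\<beta> + 1) * u powr \<beta>)"
      using that by (simp add: powr_add)
    also have "ennreal \<dots> = ennreal u * (ennreal (1 / (\<beta> + 1)) * ennreal (u powr \<beta>))"
      using that \<open>\<beta> > -1\<close> by (subst ennreal_mult, simp, simp, subst ennreal_mult) auto
    finally show ?thesis .
  qed
  then have "(\<integral>\<^sup>+a\<in>{0..}. ennreal (a powr \<beta>) * Sop p a \<partial>lborel) =
      (\<integral>\<^sup>+u\<in>{0..}. ennreal (1 / (\<beta> + 1)) * ennreal (u powr \<beta>) * p u \<partial>lborel)"
    by (intro nn_integral_Sop_primitive[OF assms(1)]) auto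
  also have "\<dots> = ennreal (1 / (\<beta> + 1)) * (\<integral>\<^sup>+u\<in>{0..}. ennreal (u powr \<beta>) * p u \<partial>lborel)"
    using nn_set_integral_cmult[of "\<lambda>u. ennreal (u powr \<beta>) * p u" lborel "{0..}"] by (simp add: mult.assoc)
  finally show ?thesis .
qed

lemma nn_integral_mean_Sop:
  assumes [measurable]: "p \<in> borel_measurable borel"
  shows "(\<integral>\<^sup>+a\<in>{0..}. ennreal a * Sop p a \<partial>lborel) =
    ennreal (1 / 2) * (\<integral>\<^sup>+u\<in>{0..}. ennreal u * p u \<partial>lborel)"
proof -
  have "(\<integral>\<^sup>+a\<in>{0..}. ennreal a * f a \<partial>lborel) = (\<integral>\<^sup>+a\<in>{0..}. ennreal (a powr 1) * f a \<partial>lborel)" for f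
    by (rule set_nn_integral_cong) auto
  then show ?thesis
    using nn_integral_powr_Sop[OF assms, of 1] by simp
qed

lemma nn_integral_lborel_shift:
  fixes f :: "real \<Rightarrow> ennreal"
  assumes [measurable]: "f \<in> borel_measurable borel"
  shows "(\<integral>\<^sup>+x. f x \<partial>lborel) = (\<integral>\<^sup>+x. f (t + x) \<partial>lborel)"
  using nn_integral_real_affine[OF assms, of 1 t] by simp

lemma nn_integral_Top_Fubini:
  assumes [measurable]: "p \<in> borel_measurable borel" "g \<in> borel_measurable borel"
  shows "(\<integral>\<^sup>+x\<in>{0..}. g x * Top p x \<partial>lborel) =
    (\<integral>\<^sup>+v\<in>{0..}. Sop p v * (\<integral>\<^sup>+a\<in>{0..}. g (a + v) * Sop p a \<partial>lborel) \<partial>lborel)"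
proof -
  have "(\<integral>\<^sup>+x\<in>{0..}. g x * Top p x \<partial>lborel) =
      (\<integral>\<^sup>+x. \<integral>\<^sup>+v. g x * indicator {0..} x * (Sop p (x - v) * Sop p v * indicator {0..x} v) \<partial>lborel \<partial>lborel)"
    by (intro nn_integral_cong) (simp add: Top_def nn_integral_cmult[symmetric] ac_simps)
  also have "\<dots> = (\<integral>\<^sup>+v. \<integral>\<^sup>+x. g x * indicator {0..} x * (Sop p (x - v) * Sop p v * indicator {0..x} v) \<partial>lborel \<partial>lborel)"
    by (rule lborel_pair.Fubini'[symmetric]) measurable
  also have "\<dots> = (\<integral>\<^sup>+v. \<integral>\<^sup>+a. Sop p v * indicator {0..} v * (g (a + v) * Sop p a * indicator {0..} a) \<partial>lborel \<partial>lborel)"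
  proof (rule nn_integral_cong)
    fix v :: real
    show "(\<integral>\<^sup>+x. g x * indicator {0..} x * (Sop p (x - v) * Sop p v * indicator {0..x} v) \<partial>lborel) =
        (\<integral>\<^sup>+a. Sop p v * indicator {0..} v * (g (a + v) * Sop p a * indicator {0..} a) \<partial>lborel)"
      by (subst nn_integral_lborel_shift[where t = v], measurable)
         (intro nn_integral_cong, auto simp: indicator_def ac_simps)
  qed
  also have "\<dots> = (\<integral>\<^sup>+v. Sop p v * indicator {0..} v * (\<integral>\<^sup>+a\<in>{0..}. g (a + v) * Sop p a \<partial>lborel) \<partial>lborel)"
    by (intro nn_integral_cong nn_integral_cmult) measurable
  finally show ?thesis
    by (simp add: ac_simps)
qed

lemma nn_integral_pair_sum:
  fixes q f :: "real \<Rightarrow> ennreal"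
  assumes [measurable]: "q \<in> borel_measurable borel" "f \<in> borel_measurable borel"
  shows "(\<integral>\<^sup>+v\<in>{0..}. q v * (\<integral>\<^sup>+a\<in>{0..}. (f a + f v) * q a \<partial>lborel) \<partial>lborel) =
    2 * (\<integral>\<^sup>+a\<in>{0..}. q a \<partial>lborel) * (\<integral>\<^sup>+a\<in>{0..}. f a * q a \<partial>lborel)"
proof -
  define I where "I = (\<integral>\<^sup>+a\<in>{0..}. q a \<partial>lborel)"
  define J where "J = (\<integral>\<^sup>+a\<in>{0..}. f a * q a \<partial>lborel)"
  have inner: "(\<integral>\<^sup>+a\<in>{0..}. (f a + f v) * q a \<partial>lborel) = J + f v * I" for v
  proof -
    have "(\<integral>\<^sup>+a\<in>{0..}. (f a + f v) * q a \<partial>lborel) =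
        (\<integral>\<^sup>+a\<in>{0..}. f a * q a + f v * q a \<partial>lborel)"
      by (simp add: distrib_right)
    also have "\<dots> = J + (\<integral>\<^sup>+a\<in>{0..}. f v * q a \<partial>lborel)"
      unfolding J_def by (rule nn_set_integral_add) measurable
    also have "(\<integral>\<^sup>+a\<in>{0..}. f v * q a \<partial>lborel) = f v * I"
      unfolding I_def by (rule nn_set_integral_cmult) measurable
    finally show ?thesis .
  qed
  have "(\<integral>\<^sup>+v\<in>{0..}. q v * (J + f v * I) \<partial>lborel) =
      (\<integral>\<^sup>+v\<in>{0..}. J * q v + I * (f v * q v) \<partial>lborel)"
    by (simp add: distrib_left ac_simps)
  also have "\<dots> = (\<integral>\<^sup>+v\<in>{0..}. J * q v \<partial>lborel) + (\<integral>\<^sup>+v\<in>{0..}. I * (f v * q v) \<partial>lborel)"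
    by (rule nn_set_integral_add) measurable
  also have "(\<integral>\<^sup>+v\<in>{0..}. J * q v \<partial>lborel) = J * I"
    unfolding I_def by (rule nn_set_integral_cmult) measurable
  also have "(\<integral>\<^sup>+v\<in>{0..}. I * (f v * q v) \<partial>lborel) = I * J"
    unfolding J_def by (rule nn_set_integral_cmult) measurable
  finally show ?thesis
    unfolding inner I_def[symmetric] J_def[symmetric] by (simp add: ac_simps mult_2_right distrib_left)
qed

lemma nn_integral_Top:
  assumes [measurable]: "p \<in> borel_measurable borel"
  shows "(\<integral>\<^sup>+x\<in>{0..}. Top p x \<partial>lborel) = (\<integral>\<^sup>+u\<in>{0..}. p u \<partial>lborel)\<^sup>2"
proof -
  have "(\<integral>\<^sup>+x\<in>{0..}. Top p x \<partial>lborel) =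
      (\<integral>\<^sup>+v\<in>{0..}. (\<integral>\<^sup>+a\<in>{0..}. Sop p a \<partial>lborel) * Sop p v \<partial>lborel)"
    using nn_integral_Top_Fubini[OF assms, of "\<lambda>_. 1"] by (simp add: mult.commute)
  also have "\<dots> = (\<integral>\<^sup>+a\<in>{0..}. Sop p a \<partial>lborel)\<^sup>2"
    by (subst nn_set_integral_cmult) (measurable, simp add: power2_eq_square)
  finally show ?thesis
    by (simp add: nn_integral_Sop)
qed

lemma nn_integral_mean_Top:
  assumes [measurable]: "p \<in> borel_measurable borel"
  shows "(\<integral>\<^sup>+x\<in>{0..}. ennreal x * Top p x \<partial>lborel) =
    (\<integral>\<^sup>+u\<in>{0..}. p u \<partial>lborel) * (\<integral>\<^sup>+u\<in>{0..}. ennreal u * p u \<partial>lborel)"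
proof -
  have "(\<integral>\<^sup>+x\<in>{0..}. ennreal x * Top p x \<partial>lborel) =
      (\<integral>\<^sup>+v\<in>{0..}. Sop p v * (\<integral>\<^sup>+a\<in>{0..}. ennreal (a + v) * Sop p a \<partial>lborel) \<partial>lborel)"
    by (rule nn_integral_Top_Fubini) auto
  also have "\<dots> = (\<integral>\<^sup>+v\<in>{0..}. Sop p v * (\<integral>\<^sup>+a\<in>{0..}. (ennreal a + ennreal v) * Sop p a \<partial>lborel) \<partial>lborel)"
    by (intro set_nn_integral_cong arg_cong2[where f = "(*)"] refl) auto
  also have "\<dots> = 2 * (\<integral>\<^sup>+a\<in>{0..}. Sop p a \<partial>lborel) * (\<integral>\<^sup>+a\<in>{0..}. ennreal a * Sop p a \<partial>lborel)"
    by (rule nn_integral_pair_sum) auto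
  also have "\<dots> = (\<integral>\<^sup>+u\<in>{0..}. p u \<partial>lborel) * (\<integral>\<^sup>+u\<in>{0..}. ennreal u * p u \<partial>lborel)"
  proof -
    have "2 * x * (ennreal (1 / 2) * y) = x * y" for x y :: ennreal
      using ennreal_mult'[of 2 "1 / 2"] by (simp add: ac_simps)
    then show ?thesis
      unfolding nn_integral_Sop[OF assms] nn_integral_mean_Sop[OF assms] .
  qed
  finally show ?thesis .
qed

lemma add_powr_le_two_powr:
  fixes a b r :: real
  assumes "0 \<le> a" "0 \<le> b" "0 \<le> r"
  shows "(a + b) powr r \<le> 2 powr r * (a powr r + b powr r)"
proof -
  have "(a + b) powr r \<le> (2 * max a b) powr r"
    by (rule powr_mono2) (use assms in auto)
  also have "\<dots> = 2 powr r * max a b powr r"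
    using assms by (simp add: powr_mult)
  also have "\<dots> \<le> 2 powr r * (a powr r + b powr r)"
    by (intro mult_left_mono) (auto simp: max_def)
  finally show ?thesis .
qed

lemma nn_integral_Top_le_pair_sum:
  fixes f g :: "real \<Rightarrow> ennreal"
  assumes [measurable]: "p \<in> borel_measurable borel" "f \<in> borel_measurable borel"
      "g \<in> borel_measurable borel"
    and split: "\<And>a v. 0 \<le> a \<Longrightarrow> 0 \<le> v \<Longrightarrow> g (a + v) \<le> f a + f v"
  shows "(\<integral>\<^sup>+x\<in>{0..}. g x * Top p x \<partial>lborel) \<le>
    2 * (\<integral>\<^sup>+u\<in>{0..}. p u \<partial>lborel) * (\<integral>\<^sup>+a\<in>{0..}. f a * Sop p a \<partial>lborel)"
proof -
  have "(\<integral>\<^sup>+x\<in>{0..}. g x * Top p x \<partial>lborel) =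
      (\<integral>\<^sup>+v\<in>{0..}. Sop p v * (\<integral>\<^sup>+a\<in>{0..}. g (a + v) * Sop p a \<partial>lborel) \<partial>lborel)"
    by (rule nn_integral_Top_Fubini) measurable
  also have "\<dots> \<le> (\<integral>\<^sup>+v\<in>{0..}. Sop p v * (\<integral>\<^sup>+a\<in>{0..}. (f a + f v) * Sop p a \<partial>lborel) \<partial>lborel)"
  proof (intro nn_integral_mono)
    fix v :: real
    have "(\<integral>\<^sup>+a\<in>{0..}. g (a + v) * Sop p a \<partial>lborel) \<le> (\<integral>\<^sup>+a\<in>{0..}. (f a + f v) * Sop p a \<partial>lborel)"
      if "0 \<le> v"
      using that by (intro nn_integral_mono) (auto intro!: mult_right_mono split simp: indicator_def)
    then show "Sop p v * (\<integral>\<^sup>+a\<in>{0..}. g (a + v) * Sop p a \<partial>lborel) * indicator {0..} v \<le>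
        Sop p v * (\<integral>\<^sup>+a\<in>{0..}. (f a + f v) * Sop p a \<partial>lborel) * indicator {0..} v"
      by (auto intro: mult_left_mono split: split_indicator)
  qed
  also have "\<dots> = 2 * (\<integral>\<^sup>+a\<in>{0..}. Sop p a \<partial>lborel) * (\<integral>\<^sup>+a\<in>{0..}. f a * Sop p a \<partial>lborel)"
    by (rule nn_integral_pair_sum) measurable
  finally show ?thesis
    by (simp only: nn_integral_Sop[OF assms(1)])
qed

lemma nn_integral_powr_Top_le:
  assumes [measurable]: "p \<in> borel_measurable borel" and "0 \<le> \<alpha>"
  shows "(\<integral>\<^sup>+x\<in>{0..}. ennreal (x powr \<alpha>) * Top p x \<partial>lborel) \<le>
    ennreal (2 powr (\<alpha> + 1) / (\<alpha> + 1)) * (\<integral>\<^sup>+u\<in>{0..}. p u \<partial>lborel) *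
      (\<integral>\<^sup>+u\<in>{0..}. ennreal (u powr \<alpha>) * p u \<partial>lborel)"
proof -
  have "ennreal ((a + v) powr \<alpha>) \<le> ennreal (2 powr \<alpha> * a powr \<alpha>) + ennreal (2 powr \<alpha> * v powr \<alpha>)"
    if "0 \<le> a" "0 \<le> v" for a v
    using add_powr_le_two_powr[OF that \<open>0 \<le> \<alpha>\<close>]
    by (simp add: distrib_left flip: ennreal_plus)
  then have "(\<integral>\<^sup>+x\<in>{0..}. ennreal (x powr \<alpha>) * Top p x \<partial>lborel) \<le>
      2 * (\<integral>\<^sup>+u\<in>{0..}. p u \<partial>lborel) * (\<integral>\<^sup>+a\<in>{0..}. ennreal (2 powr \<alpha> * a powr \<alpha>) * Sop p a \<partial>lborel)"
    by (intro nn_integral_Top_le_pair_sum) auto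
  also have "(\<integral>\<^sup>+a\<in>{0..}. ennreal (2 powr \<alpha> * a powr \<alpha>) * Sop p a \<partial>lborel) =
      ennreal (2 powr \<alpha>) * (\<integral>\<^sup>+a\<in>{0..}. ennreal (a powr \<alpha>) * Sop p a \<partial>lborel)"
    by (subst nn_set_integral_cmult[symmetric]) (measurable, auto simp: ennreal_mult mult.assoc)
  also have "(\<integral>\<^sup>+a\<in>{0..}. ennreal (a powr \<alpha>) * Sop p a \<partial>lborel) =
      ennreal (1 / (\<alpha> + 1)) * (\<integral>\<^sup>+u\<in>{0..}. ennreal (u powr \<alpha>) * p u \<partial>lborel)"
    by (rule nn_integral_powr_Sop) (use \<open>0 \<le> \<alpha>\<close> in auto)
  also have "2 * (\<integral>\<^sup>+u\<in>{0..}. p u \<partial>lborel) *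
      (ennreal (2 powr \<alpha>) * (ennreal (1 / (\<alpha> + 1)) * (\<integral>\<^sup>+u\<in>{0..}. ennreal (u powr \<alpha>) * p u \<partial>lborel))) =
      ennreal (2 powr (\<alpha> + 1) / (\<alpha> + 1)) * (\<integral>\<^sup>+u\<in>{0..}. p u \<partial>lborel) *
      (\<integral>\<^sup>+u\<in>{0..}. ennreal (u powr \<alpha>) * p u \<partial>lborel)"
  proof -
    have two_powr: "2 powr (\<alpha> + 1) / (\<alpha> + 1) = 2 * 2 powr \<alpha> * (1 / (\<alpha> + 1))"
      by (simp add: powr_add)
    have "ennreal (2 powr (\<alpha> + 1) / (\<alpha> + 1)) = 2 * ennreal (2 powr \<alpha>) * ennreal (1 / (\<alpha> + 1))"
      unfolding two_powr using \<open>0 \<le> \<alpha>\<close> by (subst ennreal_mult, simp, simp, subst ennreal_mult) auto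
    then show ?thesis
      by (simp only: ac_simps)
  qed
  finally show ?thesis .
qed

theorem lemma2:
  fixes \<alpha> w :: real and p :: "real \<Rightarrow> ennreal"
  assumes "\<alpha> \<ge> 1" and "w > 0" and "p \<in> Pclass \<alpha> w"
  shows "Top p \<in> Pclass \<alpha> w"
proof -
  from \<open>p \<in> Pclass \<alpha> w\<close> have [measurable]: "p \<in> borel_measurable borel"
    and mass: "(\<integral>\<^sup>+x\<in>{0..}. p x \<partial>lborel) = 1"
    and mean: "(\<integral>\<^sup>+x\<in>{0..}. ennreal x * p x \<partial>lborel) = ennreal w"
    and moment: "(\<integral>\<^sup>+x\<in>{0..}. ennreal (x powr \<alpha>) * p x \<partial>lborel) < \<infinity>"
    unfolding Pclass_def by auto
  have "(\<integral>\<^sup>+x\<in>{0..}. ennreal (x powr \<alpha>) * Top p x \<partial>lborel) < \<infinity>"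
  proof (rule le_less_trans)
    show "(\<integral>\<^sup>+x\<in>{0..}. ennreal (x powr \<alpha>) * Top p x \<partial>lborel) \<le>
        ennreal (2 powr (\<alpha> + 1) / (\<alpha> + 1)) * 1 * (\<integral>\<^sup>+x\<in>{0..}. ennreal (x powr \<alpha>) * p x \<partial>lborel)"
      using nn_integral_powr_Top_le[of p \<alpha>] \<open>\<alpha> \<ge> 1\<close> mass by simp
    show "\<dots> < \<infinity>"
      using moment by (simp add: ennreal_mult_less_top)
  qed
  then show ?thesis
    unfolding Pclass_def
    using nn_integral_Top[of p] nn_integral_mean_Top[of p] mass mean by simp
qed

end
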